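(* Let $d=2$. Assume $\beta\ne0$, $|\sigma^{(1)}|\ne|\sigma^{(2)}|$, and for $\alpha=1,2$: $\eta^{(\alpha)}\ne0$, $\mathbf v^{(\alpha)}_\pm\not\equiv0$. Then for every $f\in[\widetilde f_{e,l},\widetilde f_{e,u}]$ we have $\widetilde{\mathcal E}^{(1)}_f\cap\widetilde{\mathcal E}^{(2)}_f\subseteq\mathcal F_{f,e}$.
   Context: Let $\Omega\subset\mathbb{R}^2$ be a bounded Lipschitz domain and let $\chi^{(1)}$ be the indicator function of a measurable subset of $\Omega$ ("phase 1"), $\chi^{(2)}=1-\chi^{(1)}$ ("phase 2"). Let $\sigma^{(\alpha)}=\sigma^{(\alpha)}_1+\mathrm{i}\sigma^{(\alpha)}_2$ ($\alpha=1,2$) be complex constants with $\sigma^{(\alpha)}_1>0$ and $\sigma^{(1)}\neq\sigma^{(2)}$, and $\sigma=\sigma^{(1)}\chi^{(1)}+\sigma^{(2)}\chi^{(2)}$. Let $V\in H^1(\Omega;\mathbb C)$ be a weak solution of $\nabla\cdot(\sigma\nabla V)=0$ in $\Omega$. Set $\mathbf E=-\nabla V=\mathbf E_1+\mathrm{i}\mathbf E_2$, $\mathbf J=\sigma\mathbf E=\mathbf J_1+\mathrm{i}\mathbf J_2$ (real parts/imaginary parts). $\langle u\rangle=|\Omega|^{-1}\int_\Omega u$; $f^{(1)}=\langle\chi^{(1)}\rangle\in(0,1)$. For $\alpha,m=1,2$: $\mathbf E^{(\alpha)}_m=\chi^{(\alpha)}\mathbf E_m$, $\mathbf e^{(\alpha)}_m=\langle\mathbf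 E^{(\alpha)}_m\rangle$, $\eta^{(\alpha)}=\langle\|\mathbf E^{(\alpha)}_1\|^2\rangle+\langle\|\mathbf E^{(\alpha)}_2\|^2\rangle$. $\beta=\sigma^{(1)}_1\sigma^{(2)}_2-\sigma^{(1)}_2\sigma^{(2)}_1$. With $\beta\ne0$ define $\gamma=(\sigma^{(1)}_1\sigma^{(2)}_1+\sigma^{(1)}_2\sigma^{(2)}_2)/\beta$, $\psi^{(1)}=|\sigma^{(2)}|^2/\beta$, $\psi^{(2)}=|\sigma^{(1)}|^2/\beta$, $\xi^{(1)}=(\sigma^{(2)}_2\langle\mathbf E_1\cdot\mathbf J_2\rangle+\sigma^{(2)}_1\langle\mathbf E_1\cdot\mathbf J_1\rangle)/\beta$, $\xi^{(2)}=(\sigma^{(1)}_2\langle\mathbf E_1\cdot\mathbf J_2\rangle+\sigma^{(1)}_1\langle\mathbf E_1\cdot\mathbf J_1\rangle)/\beta$. For $f\in(0,1)$ and $(x,y)\in\mathbb R^2$ define $$S^{(1)}_f(x,y)=\begin{bmatrix}x-\frac{\|\mathbf e^{(1)}_1\|^2}{f} & s_1\\ s_1 & -x+\eta^{(1)}-\frac{\|\mathbf e^{(1)}_2\|^2}{f}\end{bmatrix},\quad s_1=-\gamma x-\psi^{(1)}y+\xi^{(1)}-\frac{\mathbf e^{(1)}_1\cdot\mathbf e^{(1)}_2}{f},$$ $$S^{(2)}_f(x,y)=\begin{bmatrix}y-\frac{\|\mathbf e^{(2)}_1\|^2}{1-f} & s_2\\ s_2 & -y+\eta^{(2)}-\frac{\|\mathbf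 e^{(2)}_2\|^2}{1-f}\end{bmatrix},\quad s_2=\psi^{(2)} x+\gamma y-\xi^{(2)}-\frac{\mathbf e^{(2)}_1\cdot\mathbf e^{(2)}_2}{1-f},$$ and $p^{(\alpha)}_f=\det S^{(\alpha)}_f$. Let $R_\perp=\begin{bmatrix}0&1\\-1&0\end{bmatrix}$, $B^{(\alpha)}_{12}=\langle\mathbf E^{(\alpha)}_1\cdot R_\perp\mathbf E^{(\alpha)}_2\rangle$, $f_*=f$ if $\alpha=1$ and $f_*=1-f$ if $\alpha=2$, $\tau^{(\alpha)}_f=\big(B^{(\alpha)}_{12}-\frac{1}{f_*}\mathbf e^{(\alpha)}_1\cdot R_\perp\mathbf e^{(\alpha)}_2\big)^2$. Let $\mathbf v^{(\alpha)}_\pm=\mathbf E^{(\alpha)}_1\pm R_\perp\mathbf E^{(\alpha)}_2$, $\widetilde f_{e,l}=\max_\pm \|\langle\mathbf v^{(1)}_\pm\rangle\|^2/\langle\|\mathbf v^{(1)}_\pm\|^2\rangle$, $\widetilde f_{e,u}=\min_\pm\big(1-\|\langle\mathbf v^{(2)}_\pm\rangle\|^2/\langle\|\mathbf v^{(2)}_\pm\|^2\rangle\big)$. Define $\widetilde{\mathcal E}^{(\alpha)}_f=\{(x,y)\in\mathbb R^2:p^{(\alpha)}_f(x,y)\ge\tau^{(\alpha)}_f\}$ and the rectangle $\mathcal F_{f,e}=\{(x,y): \|\mathbf e^{(1)}_1\|^2/f\le x\le \eta^{(1)}-\|\mathbf e^{(1)}_2\|^2/f,\ \|\mathbf e^{(2)}_1\|^2/(1-f)\le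 y\le \eta^{(2)}-\|\mathbf e^{(2)}_2\|^2/(1-f)\}$. *)

theory Defs
  imports "HOL-Analysis.Analysis"
begin

type_synonym pt = "real^2"

definition lipschitz_domain :: "pt set \<Rightarrow> bool" where
  "lipschitz_domain \<Omega> \<longleftrightarrow> open \<Omega> \<and> connected \<Omega> \<and> \<Omega> \<noteq> {} \<and> bounded \<Omega> \<and>
     (\<forall>p\<in>frontier \<Omega>. \<exists>(Q::real^2^2) (g::real \<Rightarrow> real) L r h.
        orthogonal_matrix Q \<and> r > 0 \<and> h > 0 \<and> L-lipschitz_on UNIV g \<and> g 0 = 0 \<and>
        (\<forall>s t. \<bar>s\<bar> < r \<and> \<bar>t\<bar> < h \<longrightarrow>
            (p + Q *v vector [s, t] \<in> \<Omega> \<longleftrightarrow> g s < t)))"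

primrec Ck :: "nat \<Rightarrow> (pt \<Rightarrow> real) \<Rightarrow> bool" where
  "Ck 0 f = continuous_on UNIV f"
| "Ck (Suc k) f = (continuous_on UNIV f \<and>
     (\<forall>i. \<exists>g. (\<forall>x. ((\<lambda>t. f (x + t *\<^sub>R axis i 1)) has_real_derivative g x) (at 0)) \<and> Ck k g))"

definition dpart :: "2 \<Rightarrow> (pt \<Rightarrow> real) \<Rightarrow> pt \<Rightarrow> real" where
  "dpart i \<phi> x = deriv (\<lambda>t. \<phi> (x + t *\<^sub>R axis i 1)) 0"

definition test_fn :: "pt set \<Rightarrow> (pt \<Rightarrow> real) \<Rightarrow> bool" where
  "test_fn \<Omega> \<phi> \<longleftrightarrow> (\<forall>k. Ck k \<phi>) \<and> compact (closure {x. \<phi> x \<noteq> 0})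
      \<and> closure {x. \<phi> x \<noteq> 0} \<subseteq> \<Omega>"

definition L2_on :: "pt set \<Rightarrow> (pt \<Rightarrow> complex) \<Rightarrow> bool" where
  "L2_on \<Omega> u \<longleftrightarrow> set_borel_measurable lebesgue \<Omega> u \<and>
      set_integrable lebesgue \<Omega> (\<lambda>x. (cmod (u x))\<^sup>2)"

definition H1_with_grad :: "pt set \<Rightarrow> (pt \<Rightarrow> complex) \<Rightarrow> (pt \<Rightarrow> complex^2) \<Rightarrow> bool" where
  "H1_with_grad \<Omega> V G \<longleftrightarrow> L2_on \<Omega> V \<and> (\<forall>i. L2_on \<Omega> (\<lambda>x. G x $ i)) \<and>
     (\<forall>\<phi> i. test_fn \<Omega> \<phi> \<longrightarrow>
        (LINT x:\<Omega>|lebesgue. V x * complex_of_real (dpart i \<phi> x))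
          = - (LINT x:\<Omega>|lebesgue. G x $ i * complex_of_real (\<phi> x)))"

definition sig :: "pt set \<Rightarrow> complex \<Rightarrow> complex \<Rightarrow> pt \<Rightarrow> complex" where
  "sig A s1 s2 x = (if x \<in> A then s1 else s2)"

definition weak_solution :: "pt set \<Rightarrow> pt set \<Rightarrow> complex \<Rightarrow> complex \<Rightarrow> (pt \<Rightarrow> complex) \<Rightarrow> (pt \<Rightarrow> complex^2) \<Rightarrow> bool" where
  "weak_solution \<Omega> A s1 s2 V G \<longleftrightarrow> H1_with_grad \<Omega> V G \<and>
     (\<forall>\<phi>. test_fn \<Omega> \<phi> \<longrightarrow>
        (LINT x:\<Omega>|lebesgue. sig A s1 s2 x * (\<Sum>i\<in>UNIV. G x $ i * complex_of_real (dpart i \<phi> x))) = 0)"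

definition avg :: "pt set \<Rightarrow> (pt \<Rightarrow> 'b::{banach,second_countable_topology}) \<Rightarrow> 'b" where
  "avg \<Omega> u = (1 / measure lebesgue \<Omega>) *\<^sub>R (LINT x:\<Omega>|lebesgue. u x)"

definition E1 :: "(pt \<Rightarrow> complex^2) \<Rightarrow> pt \<Rightarrow> real^2" where
  "E1 G x = (\<chi> i. Re (- G x $ i))"
definition E2 :: "(pt \<Rightarrow> complex^2) \<Rightarrow> pt \<Rightarrow> real^2" where
  "E2 G x = (\<chi> i. Im (- G x $ i))"
definition J1 :: "pt set \<Rightarrow> complex \<Rightarrow> complex \<Rightarrow> (pt \<Rightarrow> complex^2) \<Rightarrow> pt \<Rightarrow> real^2" where
  "J1 A s1 s2 G x = (\<chi> i. Re (sig A s1 s2 x * - G x $ i))"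
definition J2 :: "pt set \<Rightarrow> complex \<Rightarrow> complex \<Rightarrow> (pt \<Rightarrow> complex^2) \<Rightarrow> pt \<Rightarrow> real^2" where
  "J2 A s1 s2 G x = (\<chi> i. Im (sig A s1 s2 x * - G x $ i))"

definition chi :: "pt set \<Rightarrow> nat \<Rightarrow> pt \<Rightarrow> real" where
  "chi A \<alpha> x = (if \<alpha> = 1 then indicator A x else 1 - indicator A x)"

definition Em :: "(pt \<Rightarrow> complex^2) \<Rightarrow> nat \<Rightarrow> pt \<Rightarrow> real^2" where
  "Em G m = (if m = 1 then E1 G else E2 G)"

definition Eam :: "pt set \<Rightarrow> (pt \<Rightarrow> complex^2) \<Rightarrow> nat \<Rightarrow> nat \<Rightarrow> pt \<Rightarrow> real^2" where
  "Eam A G \<alpha> m x = chi A \<alpha> x *\<^sub>R Em G m x"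

definition ea :: "pt set \<Rightarrow> pt set \<Rightarrow> (pt \<Rightarrow> complex^2) \<Rightarrow> nat \<Rightarrow> nat \<Rightarrow> real^2" where
  "ea \<Omega> A G \<alpha> m = avg \<Omega> (Eam A G \<alpha> m)"

definition eta :: "pt set \<Rightarrow> pt set \<Rightarrow> (pt \<Rightarrow> complex^2) \<Rightarrow> nat \<Rightarrow> real" where
  "eta \<Omega> A G \<alpha> = avg \<Omega> (\<lambda>x. (norm (Eam A G \<alpha> 1 x))\<^sup>2) + avg \<Omega> (\<lambda>x. (norm (Eam A G \<alpha> 2 x))\<^sup>2)"

definition beta :: "complex \<Rightarrow> complex \<Rightarrow> real" where
  "beta s1 s2 = Re s1 * Im s2 - Im s1 * Re s2"

definition gam :: "complex \<Rightarrow> complex \<Rightarrow> real" where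
  "gam s1 s2 = (Re s1 * Re s2 + Im s1 * Im s2) / beta s1 s2"

definition psi1 :: "complex \<Rightarrow> complex \<Rightarrow> real" where
  "psi1 s1 s2 = (cmod s2)\<^sup>2 / beta s1 s2"
definition psi2 :: "complex \<Rightarrow> complex \<Rightarrow> real" where
  "psi2 s1 s2 = (cmod s1)\<^sup>2 / beta s1 s2"

definition xi1 :: "pt set \<Rightarrow> pt set \<Rightarrow> complex \<Rightarrow> complex \<Rightarrow> (pt \<Rightarrow> complex^2) \<Rightarrow> real" where
  "xi1 \<Omega> A s1 s2 G = (Im s2 * avg \<Omega> (\<lambda>x. E1 G x \<bullet> J2 A s1 s2 G x)
                     + Re s2 * avg \<Omega> (\<lambda>x. E1 G x \<bullet> J1 A s1 s2 G x)) / beta s1 s2"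
definition xi2 :: "pt set \<Rightarrow> pt set \<Rightarrow> complex \<Rightarrow> complex \<Rightarrow> (pt \<Rightarrow> complex^2) \<Rightarrow> real" where
  "xi2 \<Omega> A s1 s2 G = (Im s1 * avg \<Omega> (\<lambda>x. E1 G x \<bullet> J2 A s1 s2 G x)
                     + Re s1 * avg \<Omega> (\<lambda>x. E1 G x \<bullet> J1 A s1 s2 G x)) / beta s1 s2"

definition S1 :: "pt set \<Rightarrow> pt set \<Rightarrow> complex \<Rightarrow> complex \<Rightarrow> (pt \<Rightarrow> complex^2) \<Rightarrow> real \<Rightarrow> real \<Rightarrow> real \<Rightarrow> real^2^2" where
  "S1 \<Omega> A s1 s2 G f x y =
     (let e1 = ea \<Omega> A G 1 1; e2 = ea \<Omega> A G 1 2;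
          s = - gam s1 s2 * x - psi1 s1 s2 * y + xi1 \<Omega> A s1 s2 G - (e1 \<bullet> e2) / f
      in vector [vector [x - (norm e1)\<^sup>2 / f, s],
                 vector [s, - x + eta \<Omega> A G 1 - (norm e2)\<^sup>2 / f]])"

definition S2 :: "pt set \<Rightarrow> pt set \<Rightarrow> complex \<Rightarrow> complex \<Rightarrow> (pt \<Rightarrow> complex^2) \<Rightarrow> real \<Rightarrow> real \<Rightarrow> real \<Rightarrow> real^2^2" where
  "S2 \<Omega> A s1 s2 G f x y =
     (let e1 = ea \<Omega> A G 2 1; e2 = ea \<Omega> A G 2 2;
          s = psi2 s1 s2 * x + gam s1 s2 * y - xi2 \<Omega> A s1 s2 G - (e1 \<bullet> e2) / (1 - f)
      in vector [vector [y - (norm e1)\<^sup>2 / (1 - f), s],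
                 vector [s, - y + eta \<Omega> A G 2 - (norm e2)\<^sup>2 / (1 - f)]])"

definition pf :: "pt set \<Rightarrow> pt set \<Rightarrow> complex \<Rightarrow> complex \<Rightarrow> (pt \<Rightarrow> complex^2) \<Rightarrow> nat \<Rightarrow> real \<Rightarrow> real \<Rightarrow> real \<Rightarrow> real" where
  "pf \<Omega> A s1 s2 G \<alpha> f x y =
     det (if \<alpha> = 1 then S1 \<Omega> A s1 s2 G f x y else S2 \<Omega> A s1 s2 G f x y)"

definition Rperp :: "real^2^2" where
  "Rperp = vector [vector [0, 1], vector [- 1, 0]]"

definition B12 :: "pt set \<Rightarrow> pt set \<Rightarrow> (pt \<Rightarrow> complex^2) \<Rightarrow> nat \<Rightarrow> real" where
  "B12 \<Omega> A G \<alpha> = avg \<Omega> (\<lambda>x. Eam A G \<alpha> 1 x \<bullet> (Rperp *v Eam A G \<alpha> 2 x))"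

definition fstar :: "nat \<Rightarrow> real \<Rightarrow> real" where
  "fstar \<alpha> f = (if \<alpha> = 1 then f else 1 - f)"

definition tau :: "pt set \<Rightarrow> pt set \<Rightarrow> (pt \<Rightarrow> complex^2) \<Rightarrow> nat \<Rightarrow> real \<Rightarrow> real" where
  "tau \<Omega> A G \<alpha> f =
     (B12 \<Omega> A G \<alpha> - (1 / fstar \<alpha> f) * (ea \<Omega> A G \<alpha> 1 \<bullet> (Rperp *v ea \<Omega> A G \<alpha> 2)))\<^sup>2"

definition vpm :: "pt set \<Rightarrow> (pt \<Rightarrow> complex^2) \<Rightarrow> nat \<Rightarrow> bool \<Rightarrow> pt \<Rightarrow> real^2" where
  "vpm A G \<alpha> pl x =
     (if pl then Eam A G \<alpha> 1 x + Rperp *v Eam A G \<alpha> 2 x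
      else Eam A G \<alpha> 1 x - Rperp *v Eam A G \<alpha> 2 x)"

definition ratio :: "pt set \<Rightarrow> pt set \<Rightarrow> (pt \<Rightarrow> complex^2) \<Rightarrow> nat \<Rightarrow> bool \<Rightarrow> real" where
  "ratio \<Omega> A G \<alpha> pl =
     (norm (avg \<Omega> (vpm A G \<alpha> pl)))\<^sup>2 / avg \<Omega> (\<lambda>x. (norm (vpm A G \<alpha> pl x))\<^sup>2)"

definition fel :: "pt set \<Rightarrow> pt set \<Rightarrow> (pt \<Rightarrow> complex^2) \<Rightarrow> real" where
  "fel \<Omega> A G = max (ratio \<Omega> A G 1 True) (ratio \<Omega> A G 1 False)"

definition feu :: "pt set \<Rightarrow> pt set \<Rightarrow> (pt \<Rightarrow> complex^2) \<Rightarrow> real" where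
  "feu \<Omega> A G = min (1 - ratio \<Omega> A G 2 True) (1 - ratio \<Omega> A G 2 False)"

definition Etil :: "pt set \<Rightarrow> pt set \<Rightarrow> complex \<Rightarrow> complex \<Rightarrow> (pt \<Rightarrow> complex^2) \<Rightarrow> nat \<Rightarrow> real \<Rightarrow> (real \<times> real) set" where
  "Etil \<Omega> A s1 s2 G \<alpha> f = {(x, y). pf \<Omega> A s1 s2 G \<alpha> f x y \<ge> tau \<Omega> A G \<alpha> f}"

definition Ffe :: "pt set \<Rightarrow> pt set \<Rightarrow> (pt \<Rightarrow> complex^2) \<Rightarrow> real \<Rightarrow> (real \<times> real) set" where
  "Ffe \<Omega> A G f = {(x, y).
      (norm (ea \<Omega> A G 1 1))\<^sup>2 / f \<le> x \<and> x \<le> eta \<Omega> A G 1 - (norm (ea \<Omega> A G 1 2))\<^sup>2 / f \<and>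
      (norm (ea \<Omega> A G 2 1))\<^sup>2 / (1 - f) \<le> y \<and> y \<le> eta \<Omega> A G 2 - (norm (ea \<Omega> A G 2 2))\<^sup>2 / (1 - f)}"

end

theory Submission
  imports Defs
begin

text \<open>For each phase, v_+ and v_- are built from E_1 and R_perp E_2 with the isometry R_perp,
  so by the parallelogram law the two conditions |<v_pm>|^2 <= f <|v_pm|^2> (which is what
  f >= f_el says for phase 1, and f <= f_eu for phase 2 with 1 - f in place of f) add up to
  |e_1|^2 + |e_2|^2 <= f eta: the x-interval of F_{f,e} is nonempty. The diagonal entries of
  S_f are the distances of x to the two ends of that interval, and p_f >= tau_f >= 0 makes
  their product dominate the square of the off-diagonal entry; hence x lies in the interval.\<close>

lemma norm_add_isometry_sq_plus_norm_diff_isometry_sq: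
  fixes a b :: "'a::real_inner"
  assumes "norm (R b) = norm b"
  shows "(norm (a + R b))\<^sup>2 + (norm (a - R b))\<^sup>2 = 2 * (norm a)\<^sup>2 + 2 * (norm b)\<^sup>2"
proof -
  have "R b \<bullet> R b = b \<bullet> b"
    using assms by (metis power2_norm_eq_inner)
  then show ?thesis
    by (simp add: power2_norm_eq_inner inner_add inner_diff inner_commute)
qed

lemma integrable_of_square_integrable:
  fixes u :: "'a \<Rightarrow> 'b::{banach,second_countable_topology}"
  assumes "finite_measure M" "u \<in> borel_measurable M" "integrable M (\<lambda>x. (norm (u x))\<^sup>2)"
  shows "integrable M u"
proof (rule Bochner_Integration.integrable_bound)
  show "integrable M (\<lambda>x. 1 + (norm (u x))\<^sup>2)"
    using assms(1,3) by (simp add: finite_measure.integrable_const)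
  show "AE x in M. norm (u x) \<le> norm (1 + (norm (u x))\<^sup>2)"
  proof (intro AE_I2)
    fix x
    have "0 \<le> (norm (u x) - 1)\<^sup>2"
      by simp
    also have "\<dots> = (norm (u x))\<^sup>2 + 1 - 2 * norm (u x)"
      by (simp add: power2_diff)
    finally have "norm (u x) \<le> 1 + (norm (u x))\<^sup>2"
      using norm_ge_zero[of "u x"] by linarith
    then show "norm (u x) \<le> norm (1 + (norm (u x))\<^sup>2)"
      by simp
  qed
qed (use assms(2) in simp)

lemma integrable_norm_sq_add:
  fixes U W :: "'a \<Rightarrow> 'b::{real_inner,banach,second_countable_topology}"
  assumes "integrable M U" "integrable M W"
    and "integrable M (\<lambda>x. (norm (U x))\<^sup>2)" "integrable M (\<lambda>x. (norm (W x))\<^sup>2)"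
  shows "integrable M (\<lambda>x. (norm (U x + W x))\<^sup>2)"
proof (rule Bochner_Integration.integrable_bound)
  show "integrable M (\<lambda>x. 2 * (norm (U x))\<^sup>2 + 2 * (norm (W x))\<^sup>2)"
    using assms(3,4) by simp
  show "(\<lambda>x. (norm (U x + W x))\<^sup>2) \<in> borel_measurable M"
    using assms(1,2) by measurable
  show "AE x in M. norm ((norm (U x + W x))\<^sup>2) \<le> norm (2 * (norm (U x))\<^sup>2 + 2 * (norm (W x))\<^sup>2)"
  proof (intro AE_I2)
    fix x
    have "(norm (U x + W x))\<^sup>2 + (norm (U x - W x))\<^sup>2 = 2 * (norm (U x))\<^sup>2 + 2 * (norm (W x))\<^sup>2"
      using norm_add_isometry_sq_plus_norm_diff_isometry_sq[of id "W x" "U x"] by simp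
    then have "(norm (U x + W x))\<^sup>2 \<le> 2 * (norm (U x))\<^sup>2 + 2 * (norm (W x))\<^sup>2"
      using zero_le_power2[of "norm (U x - W x)"] by linarith
    then show "norm ((norm (U x + W x))\<^sup>2) \<le> norm (2 * (norm (U x))\<^sup>2 + 2 * (norm (W x))\<^sup>2)"
      by simp
  qed
qed

lemma integrable_add_diff_isometry:
  fixes P Q :: "'a \<Rightarrow> 'b::euclidean_space"
  assumes R: "linear R" "\<And>v. norm (R v) = norm v"
    and P: "integrable M P" "integrable M (\<lambda>x. (norm (P x))\<^sup>2)"
    and Q: "integrable M Q" "integrable M (\<lambda>x. (norm (Q x))\<^sup>2)"
  shows "integrable M (\<lambda>x. R (Q x))"
    and "integrable M (\<lambda>x. (norm (P x + R (Q x)))\<^sup>2)"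
    and "integrable M (\<lambda>x. (norm (P x - R (Q x)))\<^sup>2)"
proof -
  show RQ: "integrable M (\<lambda>x. R (Q x))"
    using R(1) Q(1) by (simp add: linear_conv_bounded_linear integrable_bounded_linear)
  have RQ2: "integrable M (\<lambda>x. (norm (R (Q x)))\<^sup>2)"
    using Q(2) R(2) by simp
  show "integrable M (\<lambda>x. (norm (P x + R (Q x)))\<^sup>2)"
    using integrable_norm_sq_add[OF P(1) RQ P(2) RQ2] .
  show "integrable M (\<lambda>x. (norm (P x - R (Q x)))\<^sup>2)"
    using integrable_norm_sq_add[of M P "\<lambda>x. - R (Q x)"] P RQ RQ2 by simp
qed

lemma norm_integral_sq_sum_le_of_isometry_pm:
  fixes P Q :: "'a \<Rightarrow> 'b::euclidean_space"
  assumes R: "linear R" "\<And>v. norm (R v) = norm v"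
    and P: "integrable M P" "integrable M (\<lambda>x. (norm (P x))\<^sup>2)"
    and Q: "integrable M Q" "integrable M (\<lambda>x. (norm (Q x))\<^sup>2)"
    and plus: "(norm (\<integral>x. P x + R (Q x) \<partial>M))\<^sup>2 \<le> f * (\<integral>x. (norm (P x + R (Q x)))\<^sup>2 \<partial>M)"
    and minus: "(norm (\<integral>x. P x - R (Q x) \<partial>M))\<^sup>2 \<le> f * (\<integral>x. (norm (P x - R (Q x)))\<^sup>2 \<partial>M)"
  shows "(norm (\<integral>x. P x \<partial>M))\<^sup>2 + (norm (\<integral>x. Q x \<partial>M))\<^sup>2
    \<le> f * ((\<integral>x. (norm (P x))\<^sup>2 \<partial>M) + (\<integral>x. (norm (Q x))\<^sup>2 \<partial>M))"
proof -
  note RQ = integrable_add_diff_isometry[OF R P Q]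
  have int_RQ: "(\<integral>x. R (Q x) \<partial>M) = R (\<integral>x. Q x \<partial>M)"
    using R(1) Q(1) by (simp add: linear_conv_bounded_linear integral_bounded_linear)
  have "(\<integral>x. (norm (P x + R (Q x)))\<^sup>2 \<partial>M) + (\<integral>x. (norm (P x - R (Q x)))\<^sup>2 \<partial>M)
      = (\<integral>x. (norm (P x + R (Q x)))\<^sup>2 + (norm (P x - R (Q x)))\<^sup>2 \<partial>M)"
    using RQ(2,3) by simp
  also have "\<dots> = (\<integral>x. 2 * (norm (P x))\<^sup>2 + 2 * (norm (Q x))\<^sup>2 \<partial>M)"
    using R(2) by (simp add: norm_add_isometry_sq_plus_norm_diff_isometry_sq)
  also have "\<dots> = 2 * (\<integral>x. (norm (P x))\<^sup>2 \<partial>M) + 2 * (\<integral>x. (norm (Q x))\<^sup>2 \<partial>M)"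
    using P(2) Q(2) by simp
  finally have sum_integrals: "(\<integral>x. (norm (P x + R (Q x)))\<^sup>2 \<partial>M) + (\<integral>x. (norm (P x - R (Q x)))\<^sup>2 \<partial>M)
      = 2 * (\<integral>x. (norm (P x))\<^sup>2 \<partial>M) + 2 * (\<integral>x. (norm (Q x))\<^sup>2 \<partial>M)" .
  have "(norm (\<integral>x. P x + R (Q x) \<partial>M))\<^sup>2 + (norm (\<integral>x. P x - R (Q x) \<partial>M))\<^sup>2
      = 2 * (norm (\<integral>x. P x \<partial>M))\<^sup>2 + 2 * (norm (\<integral>x. Q x \<partial>M))\<^sup>2"
    using P(1) RQ(1) R(2) int_RQ by (simp add: norm_add_isometry_sq_plus_norm_diff_isometry_sq)
  moreover have "f * (\<integral>x. (norm (P x + R (Q x)))\<^sup>2 \<partial>M) + f * (\<integral>x. (norm (P x - R (Q x)))\<^sup>2 \<partial>M)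
      = 2 * (f * ((\<integral>x. (norm (P x))\<^sup>2 \<partial>M) + (\<integral>x. (norm (Q x))\<^sup>2 \<partial>M)))"
    unfolding distrib_left[symmetric] sum_integrals by (simp add: algebra_simps)
  ultimately show ?thesis
    using plus minus by linarith
qed

lemma integral_norm_sq_pos:
  assumes "integrable M (\<lambda>x. (norm (U x))\<^sup>2)" "\<not> (AE x in M. U x = 0)"
  shows "0 < (\<integral>x. (norm (U x))\<^sup>2 \<partial>M)"
proof -
  have "(\<integral>x. (norm (U x))\<^sup>2 \<partial>M) \<noteq> 0"
    using assms integral_nonneg_eq_0_iff_AE[OF assms(1)] by auto
  then show ?thesis
    by (simp add: order_less_le)
qed

lemma Rperp_nth [simp]:
  "(Rperp *v q) $ 1 = q $ 2" "(Rperp *v q) $ 2 = - q $ 1"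
  by (simp_all add: Rperp_def matrix_vector_mult_def sum_2)

lemma norm_sq_vec_2: "(norm (q :: real^2))\<^sup>2 = (q $ 1)\<^sup>2 + (q $ 2)\<^sup>2"
  by (simp only: power2_norm_eq_inner) (simp add: inner_vec_def sum_2 power2_eq_square)

lemma norm_Rperp [simp]: "norm (Rperp *v q) = norm q"
  by (metis norm_sq_vec_2 Rperp_nth power2_minus add.commute norm_ge_zero power2_eq_iff_nonneg)

lemma avg_eq_integral_on:
  assumes "\<Omega> \<in> sets lebesgue"
  shows "avg \<Omega> u = (1 / measure lebesgue \<Omega>) *\<^sub>R (\<integral>x. u x \<partial>lebesgue_on \<Omega>)"
  using assms by (simp add: avg_def set_lebesgue_integral_def integral_restrict_space)

lemma abs_Eam_nth_le: "\<bar>Eam A G \<alpha> m x $ j\<bar> \<le> cmod (G x $ j)"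
proof -
  have "\<bar>chi A \<alpha> x\<bar> \<le> 1"
    by (simp add: chi_def indicator_def)
  moreover have "\<bar>Em G m x $ j\<bar> \<le> cmod (G x $ j)"
    using abs_Re_le_cmod[of "- G x $ j"] abs_Im_le_cmod[of "- G x $ j"]
    by (simp add: Em_def E1_def E2_def)
  ultimately have "\<bar>chi A \<alpha> x\<bar> * \<bar>Em G m x $ j\<bar> \<le> 1 * cmod (G x $ j)"
    by (intro mult_mono) auto
  then show ?thesis
    by (simp add: Eam_def abs_mult)
qed

lemma norm_Eam_sq_le: "(norm (Eam A G \<alpha> m x))\<^sup>2 \<le> (cmod (G x $ 1))\<^sup>2 + (cmod (G x $ 2))\<^sup>2"
  unfolding norm_sq_vec_2
  using abs_Eam_nth_le[of A G \<alpha> m x 1] abs_Eam_nth_le[of A G \<alpha> m x 2]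
  by (intro add_mono; metis abs_ge_zero power2_abs power_mono)

lemma integrable_Eam:
  assumes \<Omega>: "\<Omega> \<in> lmeasurable" and A: "A \<in> sets lebesgue" and H: "H1_with_grad \<Omega> V G"
  shows "integrable (lebesgue_on \<Omega>) (Eam A G \<alpha> m)"
    and "integrable (lebesgue_on \<Omega>) (\<lambda>x. (norm (Eam A G \<alpha> m x))\<^sup>2)"
proof -
  have \<Omega>_sets: "\<Omega> \<in> sets lebesgue" "\<Omega> \<inter> space lebesgue \<in> sets lebesgue"
    using \<Omega> by (simp_all add: fmeasurable_def)
  have G: "(\<lambda>x. G x $ j) \<in> borel_measurable (lebesgue_on \<Omega>)"
    "integrable (lebesgue_on \<Omega>) (\<lambda>x. (cmod (G x $ j))\<^sup>2)" for j
    using H unfolding H1_with_grad_def L2_on_def set_borel_measurable_def set_integrable_def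
    by (simp_all add: borel_measurable_restrict_space_iff[OF \<Omega>_sets(2)]
        integrable_restrict_space[OF \<Omega>_sets(2)])
  have chi: "chi A \<alpha> \<in> borel_measurable (lebesgue_on \<Omega>)"
    using A by (intro measurable_restrict_space1) (simp add: chi_def[abs_def])
  have "(\<lambda>x. Em G m x $ j) \<in> borel_measurable (lebesgue_on \<Omega>)" for j
    using G(1)[of j] by (simp add: Em_def E1_def E2_def)
  with chi have Eam_nth: "(\<lambda>x. Eam A G \<alpha> m x $ j) \<in> borel_measurable (lebesgue_on \<Omega>)" for j
    by (simp add: Eam_def)
  have "integrable (lebesgue_on \<Omega>) (\<lambda>x. (norm (Eam A G \<alpha> m x $ j))\<^sup>2)" for j
  proof (rule Bochner_Integration.integrable_bound[OF G(2)[of j]])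
    show "AE x in lebesgue_on \<Omega>. norm ((norm (Eam A G \<alpha> m x $ j))\<^sup>2) \<le> norm ((cmod (G x $ j))\<^sup>2)"
      using abs_Eam_nth_le[of A G \<alpha> m _ j]
      by (intro AE_I2) (simp, metis abs_ge_zero power2_abs power_mono)
  qed (use Eam_nth in measurable)
  then have "integrable (lebesgue_on \<Omega>) (\<lambda>x. Eam A G \<alpha> m x $ j)" for j
    using integrable_of_square_integrable[OF finite_measure_lebesgue_on[OF \<Omega>] Eam_nth] by blast
  then show Eam: "integrable (lebesgue_on \<Omega>) (Eam A G \<alpha> m)"
    using integrable_iff_component[OF \<Omega>_sets(1)] by blast
  show "integrable (lebesgue_on \<Omega>) (\<lambda>x. (norm (Eam A G \<alpha> m x))\<^sup>2)"
  proof (rule Bochner_Integration.integrable_bound[OF Bochner_Integration.integrable_add[OF G(2)[of 1] G(2)[of 2]]])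
    show "(\<lambda>x. (norm (Eam A G \<alpha> m x))\<^sup>2) \<in> borel_measurable (lebesgue_on \<Omega>)"
      using borel_measurable_integrable[OF Eam] by measurable
    show "AE x in lebesgue_on \<Omega>. norm ((norm (Eam A G \<alpha> m x))\<^sup>2)
        \<le> norm ((cmod (G x $ 1))\<^sup>2 + (cmod (G x $ 2))\<^sup>2)"
      using norm_Eam_sq_le[of A G \<alpha> m] by (intro AE_I2) simp
  qed
qed

lemma phase_mean_fields_le_eta:
  assumes \<Omega>: "\<Omega> \<in> sets lebesgue" "0 < measure lebesgue \<Omega>"
    and integrable: "\<And>m. integrable (lebesgue_on \<Omega>) (Eam A G \<alpha> m)"
      "\<And>m. integrable (lebesgue_on \<Omega>) (\<lambda>x. (norm (Eam A G \<alpha> m x))\<^sup>2)"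
    and nonzero: "\<And>pl. \<not> (AE x in lebesgue_on \<Omega>. vpm A G \<alpha> pl x = 0)"
    and ratio: "\<And>pl. ratio \<Omega> A G \<alpha> pl \<le> g"
  shows "(norm (ea \<Omega> A G \<alpha> 1))\<^sup>2 + (norm (ea \<Omega> A G \<alpha> 2))\<^sup>2 \<le> g * eta \<Omega> A G \<alpha>"
proof -
  define M where "M = lebesgue_on \<Omega>"
  define c where "c = 1 / measure lebesgue \<Omega>"
  define R where "R = (\<lambda>v. Rperp *v v)"
  define P where "P = Eam A G \<alpha> 1"
  define Q where "Q = Eam A G \<alpha> 2"
  have c: "0 < c"
    using \<Omega>(2) by (simp add: c_def)
  have avg: "avg \<Omega> u = c *\<^sub>R integral\<^sup>L M u" for u :: "real^2 \<Rightarrow> 'b::{banach,second_countable_topology}"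
    unfolding M_def c_def by (rule avg_eq_integral_on[OF \<Omega>(1)])
  have R: "linear R" "\<And>v. norm (R v) = norm v"
    by (simp_all add: R_def matrix_vector_mul_linear)
  have PQ: "integrable M P" "integrable M (\<lambda>x. (norm (P x))\<^sup>2)"
    "integrable M Q" "integrable M (\<lambda>x. (norm (Q x))\<^sup>2)"
    using integrable by (simp_all add: M_def P_def Q_def)
  have vpm: "vpm A G \<alpha> True = (\<lambda>x. P x + R (Q x))" "vpm A G \<alpha> False = (\<lambda>x. P x - R (Q x))"
    by (simp_all add: vpm_def P_def Q_def R_def fun_eq_iff)
  have v_sq: "integrable M (\<lambda>x. (norm (vpm A G \<alpha> pl x))\<^sup>2)" for pl
    using integrable_add_diff_isometry(2,3)[OF R PQ] by (cases pl) (simp_all add: vpm)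
  have v_le: "(norm (integral\<^sup>L M (vpm A G \<alpha> pl)))\<^sup>2 \<le> (g / c) * (\<integral>x. (norm (vpm A G \<alpha> pl x))\<^sup>2 \<partial>M)"
    for pl
  proof -
    have "0 < (\<integral>x. (norm (vpm A G \<alpha> pl x))\<^sup>2 \<partial>M)"
      using integral_norm_sq_pos[OF v_sq] nonzero unfolding M_def by blast
    with ratio[of pl] c have "c * (c * (norm (integral\<^sup>L M (vpm A G \<alpha> pl)))\<^sup>2)
        \<le> c * (g * (\<integral>x. (norm (vpm A G \<alpha> pl x))\<^sup>2 \<partial>M))"
      by (simp add: ratio_def avg power_mult_distrib field_simps power2_eq_square)
    with c show ?thesis
      by (simp add: field_simps)
  qed
  have "(norm (integral\<^sup>L M P))\<^sup>2 + (norm (integral\<^sup>L M Q))\<^sup>2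
      \<le> (g / c) * ((\<integral>x. (norm (P x))\<^sup>2 \<partial>M) + (\<integral>x. (norm (Q x))\<^sup>2 \<partial>M))"
    using v_le[of True] v_le[of False]
    by (intro norm_integral_sq_sum_le_of_isometry_pm[OF R PQ]) (simp_all only: vpm)
  then have "c * ((norm (integral\<^sup>L M P))\<^sup>2 + (norm (integral\<^sup>L M Q))\<^sup>2)
      \<le> g * ((\<integral>x. (norm (P x))\<^sup>2 \<partial>M) + (\<integral>x. (norm (Q x))\<^sup>2 \<partial>M))"
    using c by (simp add: field_simps)
  then have "c * (c * ((norm (integral\<^sup>L M P))\<^sup>2 + (norm (integral\<^sup>L M Q))\<^sup>2))
      \<le> c * (g * ((\<integral>x. (norm (P x))\<^sup>2 \<partial>M) + (\<integral>x. (norm (Q x))\<^sup>2 \<partial>M)))"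
    using c by (intro mult_left_mono) simp_all
  then show ?thesis
    by (simp add: ea_def eta_def avg P_def Q_def power_mult_distrib power2_eq_square algebra_simps)
qed

lemma mean_fields_le_eta:
  assumes \<Omega>: "\<Omega> \<in> lmeasurable" and A: "A \<in> sets lebesgue" and H: "H1_with_grad \<Omega> V G"
    and eta: "eta \<Omega> A G \<alpha> \<noteq> 0"
    and nonzero: "\<And>pl. \<not> (AE x in lebesgue. x \<in> \<Omega> \<longrightarrow> vpm A G \<alpha> pl x = 0)"
    and ratio: "\<And>pl. ratio \<Omega> A G \<alpha> pl \<le> g"
  shows "(norm (ea \<Omega> A G \<alpha> 1))\<^sup>2 + (norm (ea \<Omega> A G \<alpha> 2))\<^sup>2 \<le> g * eta \<Omega> A G \<alpha>"
proof (rule phase_mean_fields_le_eta[OF _ _ integrable_Eam(1)[OF \<Omega> A H] integrable_Eam(2)[OF \<Omega> A H] _ ratio])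
  have \<Omega>_sets: "\<Omega> \<in> sets lebesgue" "\<Omega> \<inter> space lebesgue \<in> sets lebesgue"
    using \<Omega> by (simp_all add: fmeasurable_def)
  then show "\<Omega> \<in> sets lebesgue" by simp
  show "\<not> (AE x in lebesgue_on \<Omega>. vpm A G \<alpha> pl x = 0)" for pl
    using nonzero[of pl] by (simp add: AE_restrict_space_iff[OF \<Omega>_sets(2)])
  have "measure lebesgue \<Omega> \<noteq> 0"
    using eta by (auto simp: eta_def avg_def)
  then show "0 < measure lebesgue \<Omega>"
    by (simp add: order_less_le)
qed

lemma bounds_of_product_ge_square:
  fixes a b e g s t x :: real
  assumes "0 < g" "a + b \<le> g * e" "0 \<le> t" "t \<le> (x - a / g) * (e - b / g - x) - s\<^sup>2"
  shows "a / g \<le> x \<and> x \<le> e - b / g"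
proof -
  have "a / g \<le> e - b / g"
    using assms(1,2) by (simp add: field_simps)
  moreover have "0 \<le> (x - a / g) * (e - b / g - x)"
    using assms(3,4) zero_le_power2[of s] by linarith
  ultimately show ?thesis
    by (auto simp: zero_le_mult_iff)
qed

lemma pf_1_eq:
  "pf \<Omega> A s1 s2 G 1 f x y = (x - (norm (ea \<Omega> A G 1 1))\<^sup>2 / f)
      * (eta \<Omega> A G 1 - (norm (ea \<Omega> A G 1 2))\<^sup>2 / f - x) - (S1 \<Omega> A s1 s2 G f x y $ 1 $ 2)\<^sup>2"
  by (simp add: pf_def S1_def Let_def det_2 power2_eq_square algebra_simps)

lemma pf_2_eq:
  "pf \<Omega> A s1 s2 G 2 f x y = (y - (norm (ea \<Omega> A G 2 1))\<^sup>2 / (1 - f))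
      * (eta \<Omega> A G 2 - (norm (ea \<Omega> A G 2 2))\<^sup>2 / (1 - f) - y) - (S2 \<Omega> A s1 s2 G f x y $ 1 $ 2)\<^sup>2"
  by (simp add: pf_def S2_def Let_def det_2 power2_eq_square algebra_simps)

theorem mainTheorem9:
  fixes \<Omega> A :: "(real^2) set" and s1 s2 :: complex
    and V :: "real^2 \<Rightarrow> complex" and G :: "real^2 \<Rightarrow> complex^2"
  assumes dom: "lipschitz_domain \<Omega>"
    and A_meas: "A \<in> sets lebesgue" and A_sub: "A \<subseteq> \<Omega>"
    and f1: "0 < avg \<Omega> (indicator A :: real^2 \<Rightarrow> real)" "avg \<Omega> (indicator A :: real^2 \<Rightarrow> real) < 1"
    and pos: "Re s1 > 0" "Re s2 > 0" and neq: "s1 \<noteq> s2"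
    and sol: "weak_solution \<Omega> A s1 s2 V G"
    and beta_nz: "beta s1 s2 \<noteq> 0"
    and abs_ne: "cmod s1 \<noteq> cmod s2"
    and eta_nz: "\<forall>\<alpha>\<in>{1,2}. eta \<Omega> A G \<alpha> \<noteq> 0"
    and v_nz: "\<forall>\<alpha>\<in>{1,2}. \<forall>pl. \<not> (AE x in lebesgue. x \<in> \<Omega> \<longrightarrow> vpm A G \<alpha> pl x = 0)"
  shows "\<forall>f. fel \<Omega> A G \<le> f \<and> f \<le> feu \<Omega> A G \<and> 0 < f \<and> f < 1 \<longrightarrow>
           Etil \<Omega> A s1 s2 G 1 f \<inter> Etil \<Omega> A s1 s2 G 2 f \<subseteq> Ffe \<Omega> A G f"
proof (intro allI impI subsetI)
  fix f z
  assume f: "fel \<Omega> A G \<le> f \<and> f \<le> feu \<Omega> A G \<and> 0 < f \<and> f < 1"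
    and z: "z \<in> Etil \<Omega> A s1 s2 G 1 f \<inter> Etil \<Omega> A s1 s2 G 2 f"
  obtain x y where xy: "z = (x, y)"
    by fastforce
  have \<Omega>: "\<Omega> \<in> lmeasurable"
    using dom lmeasurable_open unfolding lipschitz_domain_def by blast
  have H: "H1_with_grad \<Omega> V G"
    using sol by (simp add: weak_solution_def)
  note mean_bound = mean_fields_le_eta[OF \<Omega> A_meas H]
  have "ratio \<Omega> A G 1 pl \<le> f" "ratio \<Omega> A G 2 pl \<le> 1 - f" for pl
    using f by (cases pl; simp add: fel_def feu_def)+
  then have mean_1: "(norm (ea \<Omega> A G 1 1))\<^sup>2 + (norm (ea \<Omega> A G 1 2))\<^sup>2 \<le> f * eta \<Omega> A G 1"
    and mean_2: "(norm (ea \<Omega> A G 2 1))\<^sup>2 + (norm (ea \<Omega> A G 2 2))\<^sup>2 \<le> (1 - f) * eta \<Omega> A G 2"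
    using eta_nz v_nz by (intro mean_bound; simp)+
  have tau: "0 \<le> tau \<Omega> A G \<alpha> f" for \<alpha>
    by (simp add: tau_def)
  have pf: "tau \<Omega> A G 1 f \<le> pf \<Omega> A s1 s2 G 1 f x y" "tau \<Omega> A G 2 f \<le> pf \<Omega> A s1 s2 G 2 f x y"
    using z by (simp_all add: xy Etil_def)
  have "(norm (ea \<Omega> A G 1 1))\<^sup>2 / f \<le> x \<and> x \<le> eta \<Omega> A G 1 - (norm (ea \<Omega> A G 1 2))\<^sup>2 / f"
    using f by (intro bounds_of_product_ge_square[OF _ mean_1 tau pf(1)[unfolded pf_1_eq]]) simp
  moreover have "(norm (ea \<Omega> A G 2 1))\<^sup>2 / (1 - f) \<le> y
      \<and> y \<le> eta \<Omega> A G 2 - (norm (ea \<Omega> A G 2 2))\<^sup>2 / (1 - f)"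
    using f by (intro bounds_of_product_ge_square[OF _ mean_2 tau pf(2)[unfolded pf_2_eq]]) simp
  ultimately show "z \<in> Ffe \<Omega> A G f"
    by (simp add: xy Ffe_def)
qed

end
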